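(* Let $m\ge n$, $0\le r<n$, $A^1,\dots,A^l\in\mathbb{R}^{m\times n}$, $b\in\mathbb{R}^l$, and let $X\in\mathcal{L}\cap\mathcal{M}(r)$ of rank $s$ with SVD $X=U\Sigma V^\top$ as in the context. If Assumption 2 holds at $X$, then $$\mathrm{T}^B_{\mathcal{L}\cap\mathcal{M}_X(r)}(X)=\mathrm{T}_{\mathcal{L}}(X)\cap\mathrm{T}^B_{\mathcal{M}_X(r)}(X).$$
   Context: $\langle X,Y\rangle=\sum_{i,j}X_{ij}Y_{ij}$. $\mathcal{A}(X)=(\langle A^1,X\rangle,\dots,\langle A^l,X\rangle)^\top$, $\mathcal{L}=\{X:\mathcal{A}(X)=b\}$, $\mathrm{T}_\mathcal{L}(X)=\{\Xi:\langle A^i,\Xi\rangle=0,\ i=1,\dots,l\}$, $\mathcal{M}(r)=\{X:\operatorname{rank}(X)\le r\}$. SVD convention: $X=U\Sigma V^\top$ with $U$, $V$ orthogonal of sizes $m$, $n$, $\Sigma$ with diagonal $\sigma_1\ge\dots\ge\sigma_s>0$ followed by zeros, $\Gamma=\{1,\dots,s\}$; $U_J,V_J$ are column submatrices indexed by $J$. $\mathcal{J}=\{J\subseteq\{1,\dots,n\}:|J|=r,\ \Gamma\subseteq J\}$, $\mathcal{M}_X(J)=\{UBV_J^\top:B\in\mathbb{R}^{m\times r}\}$, $\mathcal{M}_X(r)=\bigcup_{J\in\mathcal{J}}\mathcal{M}_X(J)$. The Bouligand tangent cone $\mathrm{T}^B_\Omega(X)$ of a closed set $\Omega$ at $X\in\Omega$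 is the set of $\Xi$ for which there exist $X^k\in\Omega$, $X^k\to X$, $t_k\downarrow0$ with $(X^k-X)/t_k\to\Xi$. $R^i_X=U^\top A^iV_\Gamma$; Assumption 2 at $X$: $R^1_X,\dots,R^l_X$ are linearly independent. *)

theory Defs
  imports Complex_Main "Jordan_Normal_Form.Matrix"
begin

text \<open>Real m x n matrices are Jordan_Normal_Form matrices in carrier_mat m n.
Indices are 0-based: paper index i corresponds to i-1 here.\<close>

definition frob_inner :: "real mat \<Rightarrow> real mat \<Rightarrow> real" where
  "frob_inner X Y = (\<Sum>i<dim_row X. \<Sum>j<dim_col X. X $$ (i,j) * Y $$ (i,j))"

definition frob_norm :: "real mat \<Rightarrow> real" where
  "frob_norm X = sqrt (frob_inner X X)"

definition affL :: "nat \<Rightarrow> nat \<Rightarrow> nat \<Rightarrow> (nat \<Rightarrow> real mat) \<Rightarrow> (nat \<Rightarrow> real) \<Rightarrow> real mat set" where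
  "affL m n l A b = {X \<in> carrier_mat m n. \<forall>i<l. frob_inner (A i) X = b i}"

text \<open>Tangent space T_L(X) (independent of X).\<close>
definition tanL :: "nat \<Rightarrow> nat \<Rightarrow> nat \<Rightarrow> (nat \<Rightarrow> real mat) \<Rightarrow> real mat set" where
  "tanL m n l A = {Xi \<in> carrier_mat m n. \<forall>i<l. frob_inner (A i) Xi = 0}"

definition bouligand :: "nat \<Rightarrow> nat \<Rightarrow> real mat set \<Rightarrow> real mat \<Rightarrow> real mat set" where
  "bouligand m n Omega X = {Xi \<in> carrier_mat m n. \<exists>(Xs :: nat \<Rightarrow> real mat) (t :: nat \<Rightarrow> real).
      (\<forall>k. Xs k \<in> Omega) \<and> (\<lambda>k. frob_norm (Xs k - X)) \<longlonglongrightarrow> 0 \<and>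
      (\<forall>k. t k > 0) \<and> decseq t \<and> t \<longlonglongrightarrow> 0 \<and>
      (\<lambda>k. frob_norm ((1 / t k) \<cdot>\<^sub>m (Xs k - X) - Xi)) \<longlonglongrightarrow> 0}"

definition col_sub :: "real mat \<Rightarrow> nat set \<Rightarrow> real mat" where
  "col_sub V J = mat (dim_row V) (card J) (\<lambda>(i,k). V $$ (i, sorted_list_of_set J ! k))"

definition idxJ :: "nat \<Rightarrow> nat \<Rightarrow> nat \<Rightarrow> nat set set" where
  "idxJ n r s = {J. J \<subseteq> {0..<n} \<and> card J = r \<and> {0..<s} \<subseteq> J}"

definition MXJ :: "nat \<Rightarrow> real mat \<Rightarrow> real mat \<Rightarrow> nat set \<Rightarrow> real mat set" where
  "MXJ m U V J = {U * B * transpose_mat (col_sub V J) | B. B \<in> carrier_mat m (card J)}"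

definition MXr :: "nat \<Rightarrow> nat \<Rightarrow> nat \<Rightarrow> nat \<Rightarrow> real mat \<Rightarrow> real mat \<Rightarrow> real mat set" where
  "MXr m n r s U V = (\<Union>J\<in>idxJ n r s. MXJ m U V J)"

definition is_svd :: "nat \<Rightarrow> nat \<Rightarrow> real mat \<Rightarrow> real mat \<Rightarrow> real mat \<Rightarrow> real mat \<Rightarrow> nat \<Rightarrow> bool" where
  "is_svd m n X U Sig V s \<longleftrightarrow>
     U \<in> carrier_mat m m \<and> transpose_mat U * U = 1\<^sub>m m \<and>
     V \<in> carrier_mat n n \<and> transpose_mat V * V = 1\<^sub>m n \<and>
     Sig \<in> carrier_mat m n \<and> s \<le> min m n \<and>
     (\<forall>i<m. \<forall>j<n. i \<noteq> j \<longrightarrow> Sig $$ (i,j) = 0) \<and>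
     (\<forall>i<s. Sig $$ (i,i) > 0) \<and>
     (\<forall>i j. i \<le> j \<longrightarrow> j < s \<longrightarrow> Sig $$ (j,j) \<le> Sig $$ (i,i)) \<and>
     (\<forall>i. s \<le> i \<longrightarrow> i < min m n \<longrightarrow> Sig $$ (i,i) = 0) \<and>
     X = U * Sig * transpose_mat V"

text \<open>Assumption 2: R^i_X = U^T A^i V_Gamma (i < l) linearly independent.\<close>
definition assumption2 :: "nat \<Rightarrow> (nat \<Rightarrow> real mat) \<Rightarrow> real mat \<Rightarrow> real mat \<Rightarrow> nat \<Rightarrow> bool" where
  "assumption2 l A U V s \<longleftrightarrow>
     (let R = (\<lambda>i. transpose_mat U * A i * col_sub V {0..<s}) in
      \<forall>c :: nat \<Rightarrow> real.
        (\<forall>p<dim_row U. \<forall>q<s. (\<Sum>i<l. c i * R i $$ (p,q)) = 0) \<longrightarrow> (\<forall>i<l. c i = 0))"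

end

theory Submission
  imports Defs "HOL-Library.Infinite_Set"
begin

text \<open>Each \<open>M\<^sub>X(J)\<close> is a linear subspace containing \<open>X\<close>, so \<open>L \<inter> M\<^sub>X(r)\<close> is the finite union of
the affine sets \<open>L \<inter> M\<^sub>X(J)\<close> through \<open>X\<close>. A tangent vector to a finite union is, by the
pigeonhole principle along a subsequence, tangent to one of the pieces, and the tangent cone of an
affine set at one of its points is its (closed) direction space. Hence both sides equal the union
of \<open>T\<^sub>L(X) \<inter> M\<^sub>X(J)\<close> over \<open>J\<close>.\<close>

lemma index_mult_mat_sum:
  assumes "A \<in> carrier_mat p m" "B \<in> carrier_mat m n" "i < p" "j < n"
  shows "(A * B) $$ (i,j) = (\<Sum>a<m. A $$ (i,a) * B $$ (a,j))"
  using assms by (auto simp: scalar_prod_def lessThan_atLeast0 intro!: sum.cong)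

lemma sandwich_smult_diff:
  fixes L R P Q :: "real mat"
  assumes L: "L \<in> carrier_mat p m" and R: "R \<in> carrier_mat n q"
    and P: "P \<in> carrier_mat m n" and Q: "Q \<in> carrier_mat m n"
  shows "L * (c \<cdot>\<^sub>m (P - Q)) * R = c \<cdot>\<^sub>m (L * P * R - L * Q * R)"
proof -
  have LP: "L * P \<in> carrier_mat p n" "L * Q \<in> carrier_mat p n" using L P Q by auto
  have "L * (c \<cdot>\<^sub>m (P - Q)) = c \<cdot>\<^sub>m (L * P - L * Q)"
    using mult_smult_distrib[OF L minus_carrier_mat[OF Q]] mult_minus_distrib_mat[OF L P Q] by simp
  then have "L * (c \<cdot>\<^sub>m (P - Q)) * R = c \<cdot>\<^sub>m ((L * P - L * Q) * R)"
    using mult_smult_assoc_mat[OF minus_carrier_mat[OF LP(2)] R] by simp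
  also have "(L * P - L * Q) * R = L * P * R - L * Q * R"
    by (rule minus_mult_distrib_mat[OF LP R])
  finally show ?thesis .
qed

lemma sandwich_add_smult:
  fixes L R P Q :: "real mat"
  assumes L: "L \<in> carrier_mat p m" and R: "R \<in> carrier_mat n q"
    and P: "P \<in> carrier_mat m n" and Q: "Q \<in> carrier_mat m n"
  shows "L * (P + c \<cdot>\<^sub>m Q) * R = L * P * R + c \<cdot>\<^sub>m (L * Q * R)"
proof -
  have LP: "L * P \<in> carrier_mat p n" "L * Q \<in> carrier_mat p n" using L P Q by auto
  have "L * (P + c \<cdot>\<^sub>m Q) = L * P + c \<cdot>\<^sub>m (L * Q)"
    using mult_add_distrib_mat[OF L P smult_carrier_mat[OF Q]] mult_smult_distrib[OF L Q] by simp
  then have "L * (P + c \<cdot>\<^sub>m Q) * R = L * P * R + (c \<cdot>\<^sub>m (L * Q)) * R"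
    using add_mult_distrib_mat[OF LP(1) _ R] LP by simp
  also have "(c \<cdot>\<^sub>m (L * Q)) * R = c \<cdot>\<^sub>m (L * Q * R)" by (rule mult_smult_assoc_mat[OF LP(2) R])
  finally show ?thesis .
qed

definition entrywise_lim :: "nat \<Rightarrow> nat \<Rightarrow> (nat \<Rightarrow> real mat) \<Rightarrow> real mat \<Rightarrow> bool" where
  "entrywise_lim m n Y Z \<longleftrightarrow> (\<forall>i<m. \<forall>j<n. (\<lambda>k. Y k $$ (i,j)) \<longlonglongrightarrow> Z $$ (i,j))"

lemma entrywise_lim_unique:
  assumes "entrywise_lim m n Y Z" "entrywise_lim m n Y Z'"
    and "Z \<in> carrier_mat m n" "Z' \<in> carrier_mat m n"
  shows "Z = Z'"
proof (rule eq_matI)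
  fix i j assume "i < dim_row Z'" "j < dim_col Z'"
  then show "Z $$ (i,j) = Z' $$ (i,j)"
    using assms unfolding entrywise_lim_def by (metis LIMSEQ_unique carrier_matD)
qed (use assms in auto)

lemma entrywise_lim_mult_left:
  assumes L: "L \<in> carrier_mat p m" and Y: "\<And>k. Y k \<in> carrier_mat m n" and Z: "Z \<in> carrier_mat m n"
    and lim: "entrywise_lim m n Y Z"
  shows "entrywise_lim p n (\<lambda>k. L * Y k) (L * Z)"
  unfolding entrywise_lim_def
proof (intro allI impI)
  fix i j assume ij: "i < p" "j < n"
  have "(\<lambda>k. \<Sum>a<m. L $$ (i,a) * Y k $$ (a,j)) \<longlonglongrightarrow> (\<Sum>a<m. L $$ (i,a) * Z $$ (a,j))"
    using lim ij unfolding entrywise_lim_def by (intro tendsto_intros) auto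
  then show "(\<lambda>k. (L * Y k) $$ (i,j)) \<longlonglongrightarrow> (L * Z) $$ (i,j)"
    using index_mult_mat_sum[OF L Y ij] index_mult_mat_sum[OF L Z ij] by simp
qed

lemma entrywise_lim_mult_right:
  assumes R: "R \<in> carrier_mat n q" and Y: "\<And>k. Y k \<in> carrier_mat m n" and Z: "Z \<in> carrier_mat m n"
    and lim: "entrywise_lim m n Y Z"
  shows "entrywise_lim m q (\<lambda>k. Y k * R) (Z * R)"
  unfolding entrywise_lim_def
proof (intro allI impI)
  fix i j assume ij: "i < m" "j < q"
  have "(\<lambda>k. \<Sum>a<n. Y k $$ (i,a) * R $$ (a,j)) \<longlonglongrightarrow> (\<Sum>a<n. Z $$ (i,a) * R $$ (a,j))"
    using lim ij unfolding entrywise_lim_def by (intro tendsto_intros) auto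
  then show "(\<lambda>k. (Y k * R) $$ (i,j)) \<longlonglongrightarrow> (Z * R) $$ (i,j)"
    using index_mult_mat_sum[OF Y R ij] index_mult_mat_sum[OF Z R ij] by simp
qed

lemma entrywise_lim_sandwich:
  assumes L: "L \<in> carrier_mat p m" and R: "R \<in> carrier_mat n q"
    and Y: "\<And>k. Y k \<in> carrier_mat m n" and Z: "Z \<in> carrier_mat m n"
    and lim: "entrywise_lim m n Y Z"
  shows "entrywise_lim p q (\<lambda>k. L * Y k * R) (L * Z * R)"
  using entrywise_lim_mult_right[OF R _ _ entrywise_lim_mult_left[OF L Y Z lim]] L Y Z by auto

lemma abs_index_le_frob_norm:
  assumes "i < dim_row M" "j < dim_col M"
  shows "\<bar>M $$ (i,j)\<bar> \<le> frob_norm M"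
proof -
  have "(M $$ (i,j))\<^sup>2 = M $$ (i,j) * M $$ (i,j)" by (simp add: power2_eq_square)
  also have "\<dots> \<le> (\<Sum>j'<dim_col M. M $$ (i,j') * M $$ (i,j'))"
    using assms by (intro member_le_sum) auto
  also have "\<dots> \<le> frob_inner M M" unfolding frob_inner_def
    using assms
    by (intro member_le_sum[where f="\<lambda>i. \<Sum>j'<dim_col M. M $$ (i,j') * M $$ (i,j')"])
       (auto intro!: sum_nonneg)
  finally show ?thesis unfolding frob_norm_def
    by (metis real_sqrt_abs real_sqrt_le_mono)
qed

lemma frob_norm_tendsto_imp_entrywise_lim:
  assumes "\<And>k. M k \<in> carrier_mat m n" "Z \<in> carrier_mat m n"
    and "(\<lambda>k. frob_norm (M k - Z)) \<longlonglongrightarrow> 0"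
  shows "entrywise_lim m n M Z"
  unfolding entrywise_lim_def
proof (intro allI impI)
  fix i j assume ij: "i < m" "j < n"
  have "(\<lambda>k. M k $$ (i,j) - Z $$ (i,j)) \<longlonglongrightarrow> 0"
  proof (rule tendsto_0_le[OF assms(3), where K=1])
    show "\<forall>\<^sub>F k in sequentially. norm (M k $$ (i,j) - Z $$ (i,j)) \<le> norm (frob_norm (M k - Z)) * 1"
      using abs_index_le_frob_norm[of i "M k - Z" j for k] assms ij
      by (auto intro!: always_eventually order_trans[OF _ abs_ge_self])
  qed
  then show "(\<lambda>k. M k $$ (i,j)) \<longlonglongrightarrow> Z $$ (i,j)" by (simp add: LIM_zero_iff)
qed

lemma frob_norm_smult: "frob_norm (c \<cdot>\<^sub>m M) = \<bar>c\<bar> * frob_norm M"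
proof -
  have "frob_inner (c \<cdot>\<^sub>m M) (c \<cdot>\<^sub>m M) = c\<^sup>2 * frob_inner M M"
    unfolding frob_inner_def
    by (auto simp: sum_distrib_left power2_eq_square algebra_simps intro!: sum.cong)
  then show ?thesis unfolding frob_norm_def by (simp add: real_sqrt_mult)
qed

lemma frob_norm_zero_mat: "frob_norm (0\<^sub>m m n) = 0"
  unfolding frob_norm_def frob_inner_def by simp

lemma frob_inner_smult_diff:
  assumes "A \<in> carrier_mat m n" "P \<in> carrier_mat m n" "Q \<in> carrier_mat m n"
  shows "frob_inner A (c \<cdot>\<^sub>m (P - Q)) = c * (frob_inner A P - frob_inner A Q)"
  using assms unfolding frob_inner_def
  by (auto simp: sum_distrib_left sum_subtractf[symmetric] algebra_simps intro!: sum.cong)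

lemma frob_inner_add_smult:
  assumes "A \<in> carrier_mat m n" "P \<in> carrier_mat m n" "Q \<in> carrier_mat m n"
  shows "frob_inner A (P + c \<cdot>\<^sub>m Q) = frob_inner A P + c * frob_inner A Q"
  using assms unfolding frob_inner_def
  by (auto simp: sum_distrib_left sum.distrib[symmetric] algebra_simps intro!: sum.cong)

lemma tendsto_frob_inner:
  assumes "A \<in> carrier_mat m n" "entrywise_lim m n Y Z"
  shows "(\<lambda>k. frob_inner A (Y k)) \<longlonglongrightarrow> frob_inner A Z"
  using assms unfolding frob_inner_def entrywise_lim_def by (auto intro!: tendsto_intros)

lemma bouligand_mono: "\<Omega> \<subseteq> \<Omega>' \<Longrightarrow> bouligand m n \<Omega> X \<subseteq> bouligand m n \<Omega>' X"
  unfolding bouligand_def by blast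

lemma bouligand_UN_finite:
  assumes "finite I"
  shows "bouligand m n (\<Union>i\<in>I. \<Omega> i) X \<subseteq> (\<Union>i\<in>I. bouligand m n (\<Omega> i) X)"
proof
  fix Xi assume "Xi \<in> bouligand m n (\<Union>i\<in>I. \<Omega> i) X"
  then obtain Xs t where Xi: "Xi \<in> carrier_mat m n"
    and Xs: "\<forall>k. Xs k \<in> (\<Union>i\<in>I. \<Omega> i)"
    and near: "(\<lambda>k. frob_norm (Xs k - X)) \<longlonglongrightarrow> 0"
    and t: "\<forall>k. t k > 0" "decseq t" "t \<longlonglongrightarrow> 0"
    and dir: "(\<lambda>k. frob_norm ((1 / t k) \<cdot>\<^sub>m (Xs k - X) - Xi)) \<longlonglongrightarrow> 0"
    unfolding bouligand_def by blast
  have "\<forall>k. \<exists>i\<in>I. Xs k \<in> \<Omega> i" using Xs by blast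
  then obtain idx where idx: "\<And>k. idx k \<in> I" "\<And>k. Xs k \<in> \<Omega> (idx k)"
    by metis
  have "finite (range idx)" using assms idx(1) by (meson finite_subset image_subsetI)
  then obtain k0 where "infinite {k. idx k = idx k0}"
    using pigeonhole_infinite[of "UNIV :: nat set" idx] by auto
  then obtain g :: "nat \<Rightarrow> nat" where g: "strict_mono g" "\<And>k. idx (g k) = idx k0"
    using infinite_enumerate by blast
  have "decseq (t \<circ> g)"
    using t(2) strict_mono_mono[OF g(1)] unfolding decseq_def monotone_on_def by simp
  moreover have "(t \<circ> g) \<longlonglongrightarrow> 0" "\<forall>k. (t \<circ> g) k > 0"
    using LIMSEQ_subseq_LIMSEQ[OF t(3) g(1)] t(1) by auto
  moreover have "(\<lambda>k. frob_norm ((Xs \<circ> g) k - X)) \<longlonglongrightarrow> 0"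
    "(\<lambda>k. frob_norm ((1 / (t \<circ> g) k) \<cdot>\<^sub>m ((Xs \<circ> g) k - X) - Xi)) \<longlonglongrightarrow> 0"
    using LIMSEQ_subseq_LIMSEQ[OF near g(1)] LIMSEQ_subseq_LIMSEQ[OF dir g(1)] by (auto simp: o_def)
  moreover have "\<forall>k. (Xs \<circ> g) k \<in> \<Omega> (idx k0)" by (metis comp_apply idx(2) g(2))
  ultimately have "Xi \<in> bouligand m n (\<Omega> (idx k0)) X"
    unfolding bouligand_def using Xi by blast
  then show "Xi \<in> (\<Union>i\<in>I. bouligand m n (\<Omega> i) X)" using idx(1) by blast
qed

lemma bouligand_subset_closed_cone:
  assumes X: "X \<in> carrier_mat m n" and \<Omega>: "\<Omega> \<subseteq> carrier_mat m n"
    and cone: "\<And>Y c. Y \<in> \<Omega> \<Longrightarrow> c \<cdot>\<^sub>m (Y - X) \<in> K"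
    and closed: "\<And>Y Z. (\<And>k. Y k \<in> K) \<Longrightarrow> Z \<in> carrier_mat m n \<Longrightarrow> entrywise_lim m n Y Z \<Longrightarrow> Z \<in> K"
  shows "bouligand m n \<Omega> X \<subseteq> K"
proof
  fix Xi assume "Xi \<in> bouligand m n \<Omega> X"
  then obtain Xs t where Xi: "Xi \<in> carrier_mat m n" and Xs: "\<forall>k. Xs k \<in> \<Omega>"
    and dir: "(\<lambda>k. frob_norm ((1 / t k) \<cdot>\<^sub>m (Xs k - X) - Xi)) \<longlonglongrightarrow> 0"
    unfolding bouligand_def by blast
  define Y where "Y k = (1 / t k) \<cdot>\<^sub>m (Xs k - X)" for k
  have "Y k \<in> carrier_mat m n" for k unfolding Y_def using X Xs \<Omega> by auto
  then have lim: "entrywise_lim m n Y Xi"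
    by (rule frob_norm_tendsto_imp_entrywise_lim[OF _ Xi]) (use dir in \<open>simp add: Y_def\<close>)
  have "Y k \<in> K" for k unfolding Y_def using cone Xs by blast
  then show "Xi \<in> K" by (rule closed[OF _ Xi lim])
qed

lemma ray_in_bouligand:
  assumes X: "X \<in> carrier_mat m n" and Xi: "Xi \<in> carrier_mat m n"
    and ray: "\<And>c. c > 0 \<Longrightarrow> X + c \<cdot>\<^sub>m Xi \<in> \<Omega>"
  shows "Xi \<in> bouligand m n \<Omega> X"
proof -
  define t where "t k = inverse (real (Suc k))" for k
  have t: "\<forall>k. t k > 0" "decseq t" "t \<longlonglongrightarrow> 0"
    unfolding t_def decseq_def using LIMSEQ_inverse_real_of_nat by (auto intro!: le_imp_inverse_le)
  have diff: "X + t k \<cdot>\<^sub>m Xi - X = t k \<cdot>\<^sub>m Xi" for k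
    using X Xi by (intro eq_matI) auto
  have near: "(\<lambda>k. frob_norm (X + t k \<cdot>\<^sub>m Xi - X)) \<longlonglongrightarrow> 0"
    unfolding diff frob_norm_smult using t by (auto intro: tendsto_mult_left_zero simp: abs_of_pos)
  have "(1 / t k) \<cdot>\<^sub>m (X + t k \<cdot>\<^sub>m Xi - X) - Xi = 0\<^sub>m m n" for k
    unfolding diff using Xi t(1) by (intro eq_matI) (auto simp: less_imp_neq[symmetric])
  then have dir: "(\<lambda>k. frob_norm ((1 / t k) \<cdot>\<^sub>m (X + t k \<cdot>\<^sub>m Xi - X) - Xi)) \<longlonglongrightarrow> 0"
    by (simp add: frob_norm_zero_mat)
  have "\<forall>k. X + t k \<cdot>\<^sub>m Xi \<in> \<Omega>" using ray t(1) by blast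
  then show ?thesis
    unfolding bouligand_def using Xi near t dir
    by (intro CollectI conjI exI[of _ "\<lambda>k. X + t k \<cdot>\<^sub>m Xi"] exI[of _ t]) auto
qed

lemma affL_smult_diff_in_tanL:
  assumes "\<forall>i<l. A i \<in> carrier_mat m n" "X \<in> affL m n l A b" "Y \<in> affL m n l A b"
  shows "c \<cdot>\<^sub>m (Y - X) \<in> tanL m n l A"
  using assms frob_inner_smult_diff[of "A _" m n Y X c] unfolding affL_def tanL_def by auto

lemma affL_add_smult_tanL:
  assumes "\<forall>i<l. A i \<in> carrier_mat m n" "X \<in> affL m n l A b" "Xi \<in> tanL m n l A"
  shows "X + c \<cdot>\<^sub>m Xi \<in> affL m n l A b"
  using assms frob_inner_add_smult[of "A _" m n X Xi c] unfolding affL_def tanL_def by auto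

lemma tanL_closed:
  assumes "\<forall>i<l. A i \<in> carrier_mat m n" "\<And>k. Y k \<in> tanL m n l A"
    and "Z \<in> carrier_mat m n" "entrywise_lim m n Y Z"
  shows "Z \<in> tanL m n l A"
proof -
  have "frob_inner (A i) Z = 0" if "i < l" for i
  proof -
    have "(\<lambda>k. frob_inner (A i) (Y k)) \<longlonglongrightarrow> frob_inner (A i) Z"
      using tendsto_frob_inner assms that by blast
    moreover have "frob_inner (A i) (Y k) = 0" for k using assms(2) that unfolding tanL_def by blast
    ultimately show ?thesis by (simp add: LIMSEQ_const_iff)
  qed
  then show ?thesis unfolding tanL_def using assms(3) by blast
qed

lemma col_sub_carrier: "V \<in> carrier_mat n n \<Longrightarrow> col_sub V J \<in> carrier_mat n (card J)"
  unfolding col_sub_def by auto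

lemma col_sub_index:
  "i < dim_row V \<Longrightarrow> k < card J \<Longrightarrow> col_sub V J $$ (i,k) = V $$ (i, sorted_list_of_set J ! k)"
  unfolding col_sub_def by auto

lemma sorted_list_of_set_nth_mem:
  assumes "finite J" "k < card J"
  shows "sorted_list_of_set J ! k \<in> J"
  using assms nth_mem[of k "sorted_list_of_set J"] by simp

lemma sum_sorted_list_of_set_nth:
  assumes "finite J"
  shows "(\<Sum>b<card J. f (sorted_list_of_set J ! b)) = (\<Sum>a\<in>J. f a)"
proof -
  have "(\<Sum>a\<in>J. f a) = sum_list (map f (sorted_list_of_set J))"
    using sum.distinct_set_conv_list[of "sorted_list_of_set J" f] assms by simp
  also have "\<dots> = (\<Sum>b<length (sorted_list_of_set J). f (sorted_list_of_set J ! b))"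
    by (simp add: sum_list_sum_nth lessThan_atLeast0)
  finally show ?thesis by simp
qed

lemma transpose_mult_col_sub_index:
  assumes V: "V \<in> carrier_mat n n" "transpose_mat V * V = 1\<^sub>m n" and J: "finite J" "J \<subseteq> {0..<n}"
    and a: "a < n" and b: "b < card J"
  shows "(transpose_mat V * col_sub V J) $$ (a,b) = (if a = sorted_list_of_set J ! b then 1 else 0)"
proof -
  let ?j = "sorted_list_of_set J ! b"
  have j: "?j < n" using sorted_list_of_set_nth_mem[OF J(1) b] J(2) by auto
  have "(transpose_mat V * col_sub V J) $$ (a,b) = (\<Sum>c<n. transpose_mat V $$ (a,c) * V $$ (c,?j))"
    using index_mult_mat_sum[of "transpose_mat V" n n "col_sub V J" "card J" a b]
      col_sub_carrier V a b by (auto simp: col_sub_index intro!: sum.cong)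
  also have "\<dots> = (transpose_mat V * V) $$ (a,?j)"
    using index_mult_mat_sum[of "transpose_mat V" n n V n a ?j] V a j by simp
  finally show ?thesis using V a j by simp
qed

lemma col_sub_orthonormal:
  assumes V: "V \<in> carrier_mat n n" "transpose_mat V * V = 1\<^sub>m n" and J: "finite J" "J \<subseteq> {0..<n}"
  shows "transpose_mat (col_sub V J) * col_sub V J = 1\<^sub>m (card J)"
proof (rule eq_matI)
  let ?W = "col_sub V J" and ?jl = "sorted_list_of_set J"
  fix a b assume "a < dim_row (1\<^sub>m (card J))" "b < dim_col (1\<^sub>m (card J))"
  then have ab: "a < card J" "b < card J" by auto
  have ja: "?jl ! a < n" using sorted_list_of_set_nth_mem[OF J(1) ab(1)] J(2) by auto
  have W: "?W \<in> carrier_mat n (card J)" using col_sub_carrier[OF V(1)] .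
  have "(transpose_mat ?W * ?W) $$ (a,b) = (\<Sum>c<n. ?W $$ (c,a) * ?W $$ (c,b))"
    using index_mult_mat_sum[of "transpose_mat ?W" "card J" n ?W "card J" a b] W ab by simp
  also have "\<dots> = (\<Sum>c<n. transpose_mat V $$ (?jl ! a, c) * ?W $$ (c,b))"
    using W V ab ja by (intro sum.cong) (auto simp: col_sub_index)
  also have "\<dots> = (transpose_mat V * ?W) $$ (?jl ! a, b)"
    using index_mult_mat_sum[of "transpose_mat V" n n ?W "card J" "?jl ! a" b] W V ja ab by simp
  also have "\<dots> = (if a = b then 1 else 0)"
    using transpose_mult_col_sub_index[OF V J ja ab(2)] J ab by (simp add: nth_eq_iff_index_eq)
  finally show "(transpose_mat ?W * ?W) $$ (a,b) = 1\<^sub>m (card J) $$ (a,b)" using ab by simp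
qed (auto simp: col_sub_def)

lemma mult_col_sub_projection:
  assumes V: "V \<in> carrier_mat n n" "transpose_mat V * V = 1\<^sub>m n" and J: "finite J" "J \<subseteq> {0..<n}"
    and S: "S \<in> carrier_mat m n" and S0: "\<And>i a. i < m \<Longrightarrow> a < n \<Longrightarrow> a \<notin> J \<Longrightarrow> S $$ (i,a) = 0"
  shows "S * transpose_mat V * col_sub V J * transpose_mat (col_sub V J) = S * transpose_mat V"
proof -
  let ?W = "col_sub V J" and ?jl = "sorted_list_of_set J"
  have W: "?W \<in> carrier_mat n (card J)" and Vt: "transpose_mat V \<in> carrier_mat n n"
    using col_sub_carrier V by auto
  have P: "transpose_mat V * ?W \<in> carrier_mat n (card J)" using Vt W by simp
  have SP: "(S * (transpose_mat V * ?W)) $$ (i,b) = S $$ (i, ?jl ! b)"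
    if ib: "i < m" "b < card J" for i b
  proof -
    have j: "?jl ! b < n" using sorted_list_of_set_nth_mem[OF J(1) ib(2)] J(2) by auto
    have "(S * (transpose_mat V * ?W)) $$ (i,b) = (\<Sum>a<n. S $$ (i,a) * (transpose_mat V * ?W) $$ (a,b))"
      by (rule index_mult_mat_sum[OF S P ib])
    also have "\<dots> = (\<Sum>a<n. if a = ?jl ! b then S $$ (i,a) else 0)"
      using transpose_mult_col_sub_index[OF V J _ ib(2)] by (intro sum.cong) auto
    finally show ?thesis using j by simp
  qed
  show ?thesis unfolding assoc_mult_mat[OF S Vt W]
  proof (rule eq_matI)
    fix i c assume "i < dim_row (S * transpose_mat V)" "c < dim_col (S * transpose_mat V)"
    then have ic: "i < m" "c < n" using S V by auto
    have SPc: "S * (transpose_mat V * ?W) \<in> carrier_mat m (card J)" using S P by simp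
    have "(S * (transpose_mat V * ?W) * transpose_mat ?W) $$ (i,c)
        = (\<Sum>b<card J. (S * (transpose_mat V * ?W)) $$ (i,b) * transpose_mat ?W $$ (b,c))"
      using index_mult_mat_sum[OF SPc _ ic, of "transpose_mat ?W"] W by simp
    also have "\<dots> = (\<Sum>b<card J. (\<lambda>a. S $$ (i,a) * V $$ (c,a)) (?jl ! b))"
      using SP ic W V by (intro sum.cong) (auto simp: col_sub_index)
    also have "\<dots> = (\<Sum>a\<in>J. S $$ (i,a) * V $$ (c,a))" by (rule sum_sorted_list_of_set_nth[OF J(1)])
    also have "\<dots> = (\<Sum>a<n. S $$ (i,a) * V $$ (c,a))"
      using J S0 ic by (intro sum.mono_neutral_left) auto
    also have "\<dots> = (S * transpose_mat V) $$ (i,c)"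
      using index_mult_mat_sum[OF S Vt ic] V ic by (auto intro!: sum.cong)
    finally show "(S * (transpose_mat V * ?W) * transpose_mat ?W) $$ (i,c) = (S * transpose_mat V) $$ (i,c)" .
  qed (use S W V in auto)
qed

lemma MXJ_subset_carrier:
  assumes "U \<in> carrier_mat m m" "V \<in> carrier_mat n n"
  shows "MXJ m U V J \<subseteq> carrier_mat m n"
  using assms col_sub_carrier[of V n J] unfolding MXJ_def by fastforce

lemma MXJ_smult_diff:
  assumes U: "U \<in> carrier_mat m m" and V: "V \<in> carrier_mat n n"
    and "X \<in> MXJ m U V J" "Y \<in> MXJ m U V J"
  shows "c \<cdot>\<^sub>m (Y - X) \<in> MXJ m U V J"
proof -
  have Wt: "transpose_mat (col_sub V J) \<in> carrier_mat (card J) n" using col_sub_carrier[OF V] by simp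
  obtain B C where B: "B \<in> carrier_mat m (card J)" "Y = U * B * transpose_mat (col_sub V J)"
    and C: "C \<in> carrier_mat m (card J)" "X = U * C * transpose_mat (col_sub V J)"
    using assms(3,4) unfolding MXJ_def by blast
  have "c \<cdot>\<^sub>m (Y - X) = U * (c \<cdot>\<^sub>m (B - C)) * transpose_mat (col_sub V J)"
    unfolding sandwich_smult_diff[OF U Wt B(1) C(1)] B(2) C(2) ..
  moreover have "c \<cdot>\<^sub>m (B - C) \<in> carrier_mat m (card J)"
    by (rule smult_carrier_mat[OF minus_carrier_mat[OF C(1)]])
  ultimately show ?thesis unfolding MXJ_def by blast
qed

lemma MXJ_add_smult:
  assumes U: "U \<in> carrier_mat m m" and V: "V \<in> carrier_mat n n"
    and "X \<in> MXJ m U V J" "Y \<in> MXJ m U V J"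
  shows "X + c \<cdot>\<^sub>m Y \<in> MXJ m U V J"
proof -
  have Wt: "transpose_mat (col_sub V J) \<in> carrier_mat (card J) n" using col_sub_carrier[OF V] by simp
  obtain B C where B: "B \<in> carrier_mat m (card J)" "X = U * B * transpose_mat (col_sub V J)"
    and C: "C \<in> carrier_mat m (card J)" "Y = U * C * transpose_mat (col_sub V J)"
    using assms(3,4) unfolding MXJ_def by blast
  have "X + c \<cdot>\<^sub>m Y = U * (B + c \<cdot>\<^sub>m C) * transpose_mat (col_sub V J)"
    unfolding sandwich_add_smult[OF U Wt B(1) C(1)] B(2) C(2) ..
  moreover have "B + c \<cdot>\<^sub>m C \<in> carrier_mat m (card J)" using B(1) C(1) by simp
  ultimately show ?thesis unfolding MXJ_def by blast
qed

text \<open>\<open>M\<^sub>X(J)\<close> is the fixed-point set of this entrywise continuous map, hence closed.\<close>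

definition MXJ_proj :: "real mat \<Rightarrow> real mat \<Rightarrow> nat set \<Rightarrow> real mat \<Rightarrow> real mat" where
  "MXJ_proj U V J Y = U * (transpose_mat U * Y * col_sub V J) * transpose_mat (col_sub V J)"

lemma MXJ_iff_proj_fixed:
  assumes U: "U \<in> carrier_mat m m" "transpose_mat U * U = 1\<^sub>m m"
    and V: "V \<in> carrier_mat n n" "transpose_mat V * V = 1\<^sub>m n" and J: "finite J" "J \<subseteq> {0..<n}"
  shows "Y \<in> MXJ m U V J \<longleftrightarrow> Y \<in> carrier_mat m n \<and> MXJ_proj U V J Y = Y"
proof
  let ?W = "col_sub V J"
  have W: "?W \<in> carrier_mat n (card J)" and Wt: "transpose_mat ?W \<in> carrier_mat (card J) n"
    and Ut: "transpose_mat U \<in> carrier_mat m m"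
    using col_sub_carrier[OF V(1)] U by auto
  show "Y \<in> carrier_mat m n \<and> MXJ_proj U V J Y = Y" if YM: "Y \<in> MXJ m U V J"
  proof
    show "Y \<in> carrier_mat m n" using YM MXJ_subset_carrier[OF U(1) V(1)] by blast
    obtain B where B: "B \<in> carrier_mat m (card J)" and YB: "Y = U * B * transpose_mat ?W"
      using YM unfolding MXJ_def by blast
    have BW: "B * transpose_mat ?W \<in> carrier_mat m n" using B Wt by simp
    have "transpose_mat U * (U * (B * transpose_mat ?W)) * ?W = (transpose_mat U * U) * (B * transpose_mat ?W) * ?W"
      unfolding assoc_mult_mat[OF Ut U(1) BW] ..
    also have "\<dots> = B * (transpose_mat ?W * ?W)"
      unfolding U(2) left_mult_one_mat[OF BW] using assoc_mult_mat[OF B Wt W] .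
    also have "\<dots> = B" using col_sub_orthonormal[OF V J] B by simp
    finally have coords: "transpose_mat U * Y * ?W = B" unfolding YB assoc_mult_mat[OF U(1) B Wt] .
    show "MXJ_proj U V J Y = Y" unfolding MXJ_proj_def coords using YB by simp
  qed
  show "Y \<in> MXJ m U V J" if "Y \<in> carrier_mat m n \<and> MXJ_proj U V J Y = Y"
  proof -
    let ?B = "transpose_mat U * Y * ?W"
    show ?thesis unfolding MXJ_def
    proof (intro CollectI exI conjI)
      show "Y = U * ?B * transpose_mat ?W" using that unfolding MXJ_proj_def by (metis (no_types))
      show "?B \<in> carrier_mat m (card J)" using that Ut W by auto
    qed
  qed
qed

lemma MXJ_closed:
  assumes U: "U \<in> carrier_mat m m" "transpose_mat U * U = 1\<^sub>m m"
    and V: "V \<in> carrier_mat n n" "transpose_mat V * V = 1\<^sub>m n" and J: "finite J" "J \<subseteq> {0..<n}"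
    and Y: "\<And>k. Y k \<in> MXJ m U V J" and Z: "Z \<in> carrier_mat m n" and lim: "entrywise_lim m n Y Z"
  shows "Z \<in> MXJ m U V J"
proof -
  note fixed = MXJ_iff_proj_fixed[OF U V J]
  have W: "col_sub V J \<in> carrier_mat n (card J)" using col_sub_carrier[OF V(1)] .
  have Yc: "Y k \<in> carrier_mat m n" for k using Y fixed by blast
  have Ut: "transpose_mat U \<in> carrier_mat m m" and Wt: "transpose_mat (col_sub V J) \<in> carrier_mat (card J) n"
    using U W by auto
  have "entrywise_lim m (card J) (\<lambda>k. transpose_mat U * Y k * col_sub V J) (transpose_mat U * Z * col_sub V J)"
    by (rule entrywise_lim_sandwich[OF Ut W Yc Z lim])
  then have "entrywise_lim m n (\<lambda>k. MXJ_proj U V J (Y k)) (MXJ_proj U V J Z)"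
    unfolding MXJ_proj_def using Ut W Yc Z by (intro entrywise_lim_sandwich[OF U(1) Wt]) auto
  moreover have "MXJ_proj U V J (Y k) = Y k" for k using Y fixed by blast
  ultimately have "entrywise_lim m n Y (MXJ_proj U V J Z)" by simp
  moreover have "MXJ_proj U V J Z \<in> carrier_mat m n"
    unfolding MXJ_proj_def using U(1) Ut W Wt Z by (meson mult_carrier_mat)
  ultimately have "MXJ_proj U V J Z = Z" using entrywise_lim_unique[OF _ lim _ Z] by blast
  then show ?thesis using fixed Z by blast
qed

lemma svd_mem_MXJ:
  assumes svd: "is_svd m n X U Sig V s" and mn: "n \<le> m" and J: "J \<in> idxJ n r s"
  shows "X \<in> MXJ m U V J"
proof -
  have U: "U \<in> carrier_mat m m" and V: "V \<in> carrier_mat n n" "transpose_mat V * V = 1\<^sub>m n"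
    and S: "Sig \<in> carrier_mat m n" and X: "X = U * Sig * transpose_mat V"
    using svd unfolding is_svd_def by auto
  have Jn: "finite J" "J \<subseteq> {0..<n}" and Js: "{0..<s} \<subseteq> J"
    using J unfolding idxJ_def by (auto intro: finite_subset)
  have S0: "Sig $$ (i,a) = 0" if "i < m" "a < n" "a \<notin> J" for i a
  proof -
    have "s \<le> a" using Js that(3) by (metis atLeastLessThan_iff not_le subsetD zero_le)
    then show ?thesis using svd that mn unfolding is_svd_def by (cases "i = a") auto
  qed
  let ?W = "col_sub V J"
  have W: "?W \<in> carrier_mat n (card J)" and Vt: "transpose_mat V \<in> carrier_mat n n"
    using col_sub_carrier V by auto
  have B: "Sig * transpose_mat V * ?W \<in> carrier_mat m (card J)" using S Vt W by simp
  have "U * (Sig * transpose_mat V * ?W) * transpose_mat ?W = U * (Sig * transpose_mat V)"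
    using assoc_mult_mat[OF U B, of "transpose_mat ?W" n] W mult_col_sub_projection[OF V Jn S S0]
    by simp
  also have "\<dots> = X" unfolding X by (rule assoc_mult_mat[OF U S Vt, symmetric])
  finally show ?thesis unfolding MXJ_def using B by blast
qed

lemma finite_idxJ: "finite (idxJ n r s)"
  by (rule finite_subset[of _ "Pow {0..<n}"]) (auto simp: idxJ_def)

lemma idxJ_D:
  assumes "J \<in> idxJ n r s"
  shows "finite J" "J \<subseteq> {0..<n}"
  using assms unfolding idxJ_def by (auto intro: finite_subset)

theorem lemma3p3:
  fixes m n r l s :: nat and A :: "nat \<Rightarrow> real mat" and b :: "nat \<Rightarrow> real"
    and X U Sig V :: "real mat"
  assumes "n \<le> m" and "r < n"
    and "\<forall>i<l. A i \<in> carrier_mat m n"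
    and "is_svd m n X U Sig V s"
    and "X \<in> affL m n l A b"
    and "s \<le> r"
    and "assumption2 l A U V s"
  shows "bouligand m n (affL m n l A b \<inter> MXr m n r s U V) X
         = tanL m n l A \<inter> bouligand m n (MXr m n r s U V) X"
proof -
  note A = assms(3) and svd = assms(4) and XL = assms(5)
  have U: "U \<in> carrier_mat m m" "transpose_mat U * U = 1\<^sub>m m"
    and V: "V \<in> carrier_mat n n" "transpose_mat V * V = 1\<^sub>m n"
    using svd unfolding is_svd_def by auto
  have X: "X \<in> carrier_mat m n" using XL unfolding affL_def by blast
  have XJ: "X \<in> MXJ m U V J" if "J \<in> idxJ n r s" for J by (rule svd_mem_MXJ[OF svd assms(1) that])
  have tangent_MXJ: "bouligand m n (MXJ m U V J) X \<subseteq> MXJ m U V J" if J: "J \<in> idxJ n r s" for J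
    by (rule bouligand_subset_closed_cone[OF X MXJ_subset_carrier[OF U(1) V(1)]
          MXJ_smult_diff[OF U(1) V(1) XJ[OF J]] MXJ_closed[OF U V idxJ_D[OF J]]])
  have tangent_affL: "bouligand m n (affL m n l A b) X \<subseteq> tanL m n l A"
    using affL_smult_diff_in_tanL[OF A XL] tanL_closed[OF A]
    by (intro bouligand_subset_closed_cone[OF X]) (auto simp: affL_def)
  show ?thesis
  proof
    show "bouligand m n (affL m n l A b \<inter> MXr m n r s U V) X
        \<subseteq> tanL m n l A \<inter> bouligand m n (MXr m n r s U V) X"
      using tangent_affL bouligand_mono[of "affL m n l A b \<inter> MXr m n r s U V"] by blast
    show "tanL m n l A \<inter> bouligand m n (MXr m n r s U V) X
        \<subseteq> bouligand m n (affL m n l A b \<inter> MXr m n r s U V) X"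
    proof
      fix Xi assume Xi: "Xi \<in> tanL m n l A \<inter> bouligand m n (MXr m n r s U V) X"
      then obtain J where J: "J \<in> idxJ n r s" and "Xi \<in> bouligand m n (MXJ m U V J) X"
        using bouligand_UN_finite[OF finite_idxJ] unfolding MXr_def by blast
      then have "Xi \<in> MXJ m U V J" using tangent_MXJ by blast
      then have "X + c \<cdot>\<^sub>m Xi \<in> affL m n l A b \<inter> MXr m n r s U V" for c
        using affL_add_smult_tanL[OF A XL] MXJ_add_smult[OF U(1) V(1) XJ[OF J]] J Xi
        unfolding MXr_def by blast
      then show "Xi \<in> bouligand m n (affL m n l A b \<inter> MXr m n r s U V) X"
        using ray_in_bouligand[OF X] Xi unfolding tanL_def by blast
    qed
  qed
qed

end
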